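(* Let $\Theta$ be a finite set, $b$ a belief function on $\Theta$ with mass function $m_b$, and $\emptyset \subsetneq A \subseteq \Theta$. The set of $L_1$ conditional belief functions of $b$ with respect to $A$ in the mass space (the minimizers of $\|\vec{m}_b - \vec{m}_a\|_{L_1}$ over $\vec{m}_a \in \mathcal{M}_A$) is the simplex \[ \mathcal{M}_{L_1,A}[b] = Cl\big(\vec{m}[b]|_{L_1}^B A,\ \emptyset \subsetneq B \subseteq A\big), \] where, for each $\emptyset\subsetneq B\subseteq A$, the vertex $\vec{m}[b]|_{L_1}^B A$ is the mass vector $\vec{m}_a\in\mathcal{M}_A$ with \[ m_a(B) = m_b(B) + 1 - b(A) = m_b(B) + pl_b(A^c), \qquad m_a(X) = m_b(X)\ \ \forall\, \emptyset \subsetneq X \subsetneq A,\ X \neq B. \]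
   Context: A mass function on a finite set $\Theta$ is $m:2^\Theta\to[0,1]$ with $m(\emptyset)=0$ and $\sum_{A\subseteq\Theta} m(A)=1$; the associated belief function is $b(A)=\sum_{B\subseteq A} m_b(B)$ and plausibility $pl_b(A)=1-b(A^c)$. The mass vector of $b$ is $\vec{m}_b=[m_b(B)]_{\emptyset\subsetneq B\subseteq\Theta}\in\mathbb{R}^{2^{|\Theta|}-1}$. For $\emptyset\subsetneq A\subseteq\Theta$, $\mathcal{M}_A$ is the set of mass vectors of belief functions all of whose focal elements (subsets of nonzero mass) are subsets of $A$; in particular such vectors have zero coordinates outside subsets of $A$ and coordinates over subsets of $A$ summing to $1$. $Cl(\cdot)$ denotes convex hull. The $L_1$ distance is $\|\vec{m}_b-\vec{m}_{b'}\|_{L_1}=\sum_{\emptyset\subsetneq B\subseteq\Theta}|m_b(B)-m_{b'}(B)|$. *)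

theory Defs
  imports Complex_Main
begin

text \<open>Mass functions on a finite frame Theta are represented as functions
  m :: 'a set => real which vanish outside the subsets of Theta. The mass
  vector of m is the family of values m B for nonempty B contained in Theta.\<close>

definition is_mass :: "'a set \<Rightarrow> ('a set \<Rightarrow> real) \<Rightarrow> bool" where
  "is_mass \<Theta> m \<longleftrightarrow> m {} = 0 \<and> (\<forall>B. 0 \<le> m B) \<and> (\<forall>B. \<not> B \<subseteq> \<Theta> \<longrightarrow> m B = 0)
     \<and> (\<Sum>B\<in>Pow \<Theta>. m B) = 1"

definition bel :: "('a set \<Rightarrow> real) \<Rightarrow> 'a set \<Rightarrow> real" where
  "bel m A = (\<Sum>B\<in>Pow A. m B)"

definition pl :: "'a set \<Rightarrow> ('a set \<Rightarrow> real) \<Rightarrow> 'a set \<Rightarrow> real" where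
  "pl \<Theta> m A = 1 - bel m (\<Theta> - A)"

definition mass_space_A :: "'a set \<Rightarrow> 'a set \<Rightarrow> ('a set \<Rightarrow> real) set" where
  "mass_space_A \<Theta> A = {m. is_mass \<Theta> m \<and> (\<forall>B. m B \<noteq> 0 \<longrightarrow> B \<subseteq> A)}"

definition L1_dist :: "'a set \<Rightarrow> ('a set \<Rightarrow> real) \<Rightarrow> ('a set \<Rightarrow> real) \<Rightarrow> real" where
  "L1_dist \<Theta> m m' = (\<Sum>B\<in>Pow \<Theta> - {{}}. \<bar>m B - m' B\<bar>)"

definition L1_cond :: "'a set \<Rightarrow> ('a set \<Rightarrow> real) \<Rightarrow> 'a set \<Rightarrow> ('a set \<Rightarrow> real) set" where
  "L1_cond \<Theta> m A = {ma \<in> mass_space_A \<Theta> A.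
      \<forall>m' \<in> mass_space_A \<Theta> A. L1_dist \<Theta> m ma \<le> L1_dist \<Theta> m m'}"

text \<open>Vertex m[b]|^B_{L1} A: adds 1 - b(A) to m_b(B), keeps m_b(X) on the other nonempty
  subsets X of A (for X = A, B \<noteq> A this is forced by normalisation), zero elsewhere.\<close>
definition L1_vertex :: "('a set \<Rightarrow> real) \<Rightarrow> 'a set \<Rightarrow> 'a set \<Rightarrow> ('a set \<Rightarrow> real)" where
  "L1_vertex m A B = (\<lambda>X. if X = B then m B + 1 - bel m A
                          else if X \<noteq> {} \<and> X \<subseteq> A then m X else 0)"

definition Cl :: "'i set \<Rightarrow> ('i \<Rightarrow> ('a set \<Rightarrow> real)) \<Rightarrow> ('a set \<Rightarrow> real) set" where
  "Cl I v = {(\<lambda>X. \<Sum>i\<in>I. u i * v i X) | u. (\<forall>i\<in>I. 0 \<le> u i) \<and> (\<Sum>i\<in>I. u i) = 1}"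

end

theory Submission
  imports Defs
begin

text \<open>For m_a in M_A the L1 distance to m_b splits into the part on the nonempty
  subsets of A and the mass of m_b outside A, which is 1 - b(A). As m_a has total mass 1
  on the nonempty subsets of A, the first part is at least the sum of m_a X - m_b X over
  them, i.e. again 1 - b(A), with equality iff m_a dominates m_b on every nonempty X
  contained in A. Such an m_a exists, so these are exactly the minimisers; and they are
  m_b plus the deficit 1 - b(A) spread over the nonempty subsets of A with convex weights,
  i.e. the convex combinations of the vertices.\<close>

definition dominating_masses :: "'a set \<Rightarrow> ('a set \<Rightarrow> real) \<Rightarrow> 'a set \<Rightarrow> ('a set \<Rightarrow> real) set"
  where "dominating_masses \<Theta> m A =
    {ma \<in> mass_space_A \<Theta> A. \<forall>X\<in>Pow A - {{}}. m X \<le> ma X}"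

lemma bel_eq_sum_nonempty:
  assumes "finite A" and "m {} = 0"
  shows "bel m A = (\<Sum>B\<in>Pow A - {{}}. m B)"
  using assms by (simp add: bel_def sum_diff1)

lemma sum_mass_outside_eq:
  assumes "finite \<Theta>" and "is_mass \<Theta> m" and "A \<subseteq> \<Theta>"
  shows "(\<Sum>B\<in>Pow \<Theta> - Pow A. m B) = 1 - bel m A"
proof -
  have "Pow A \<subseteq> Pow \<Theta>"
    using assms(3) by blast
  then show ?thesis
    using assms(1,2) by (simp add: is_mass_def bel_def sum_diff)
qed

lemma bel_le_one:
  assumes "finite \<Theta>" and "is_mass \<Theta> m" and "A \<subseteq> \<Theta>"
  shows "bel m A \<le> 1"
proof -
  have "0 \<le> (\<Sum>B\<in>Pow \<Theta> - Pow A. m B)"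
    using assms(2) by (simp add: is_mass_def sum_nonneg)
  then show ?thesis
    using sum_mass_outside_eq[OF assms] by simp
qed

lemma mass_space_A_vanishes:
  assumes "ma \<in> mass_space_A \<Theta> A" and "X \<notin> Pow A - {{}}"
  shows "ma X = 0"
  using assms by (auto simp: mass_space_A_def is_mass_def)

lemma mass_space_A_sum:
  assumes "finite \<Theta>" and "A \<subseteq> \<Theta>" and "ma \<in> mass_space_A \<Theta> A"
  shows "(\<Sum>X\<in>Pow A - {{}}. ma X) = 1"
proof -
  have "(\<Sum>X\<in>Pow A - {{}}. ma X) = (\<Sum>X\<in>Pow \<Theta>. ma X)"
    using assms mass_space_A_vanishes[OF assms(3)] by (intro sum.mono_neutral_left) auto
  then show ?thesis
    using assms(3) by (simp add: mass_space_A_def is_mass_def)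
qed

lemma L1_dist_mass_space_A:
  assumes "finite \<Theta>" and "is_mass \<Theta> m" and "A \<subseteq> \<Theta>" and "ma \<in> mass_space_A \<Theta> A"
  shows "L1_dist \<Theta> m ma = (\<Sum>X\<in>Pow A - {{}}. \<bar>m X - ma X\<bar>) + (1 - bel m A)"
proof -
  have split: "Pow \<Theta> - {{}} = (Pow A - {{}}) \<union> (Pow \<Theta> - Pow A)"
    using assms(3) by blast
  have "L1_dist \<Theta> m ma
      = (\<Sum>X\<in>Pow A - {{}}. \<bar>m X - ma X\<bar>) + (\<Sum>X\<in>Pow \<Theta> - Pow A. \<bar>m X - ma X\<bar>)"
    unfolding L1_dist_def split using assms(1,3)
    by (intro sum.union_disjoint) (auto intro: finite_subset)
  also have "(\<Sum>X\<in>Pow \<Theta> - Pow A. \<bar>m X - ma X\<bar>) = (\<Sum>X\<in>Pow \<Theta> - Pow A. m X)"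
    using assms(2) mass_space_A_vanishes[OF assms(4)] by (intro sum.cong) (auto simp: is_mass_def)
  finally show ?thesis
    using sum_mass_outside_eq[OF assms(1-3)] by simp
qed

lemma L1_dist_mass_space_A_excess:
  assumes "finite \<Theta>" and "is_mass \<Theta> m" and "A \<subseteq> \<Theta>" and "ma \<in> mass_space_A \<Theta> A"
  shows "L1_dist \<Theta> m ma
    = 2 * (1 - bel m A) + (\<Sum>X\<in>Pow A - {{}}. \<bar>m X - ma X\<bar> - (ma X - m X))"
proof -
  have "(\<Sum>X\<in>Pow A - {{}}. ma X - m X) = 1 - bel m A"
    using mass_space_A_sum[OF assms(1,3,4)] bel_eq_sum_nonempty[of A m] assms(1-3)
    by (simp add: sum_subtractf is_mass_def finite_subset)
  then show ?thesis
    using L1_dist_mass_space_A[OF assms] by (simp add: sum_subtractf)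
qed

text \<open>The summands of the excess are nonnegative and vanish exactly where m_a dominates
  m_b.\<close>

lemma L1_dist_mass_space_A_ge:
  assumes "finite \<Theta>" and "is_mass \<Theta> m" and "A \<subseteq> \<Theta>" and "ma \<in> mass_space_A \<Theta> A"
  shows "2 * (1 - bel m A) \<le> L1_dist \<Theta> m ma"
  using L1_dist_mass_space_A_excess[OF assms] by (simp add: sum_nonneg)

lemma L1_dist_mass_space_A_eq_iff:
  assumes "finite \<Theta>" and "is_mass \<Theta> m" and "A \<subseteq> \<Theta>" and "ma \<in> mass_space_A \<Theta> A"
  shows "L1_dist \<Theta> m ma = 2 * (1 - bel m A) \<longleftrightarrow> ma \<in> dominating_masses \<Theta> m A"
proof -
  have "finite (Pow A - {{}})"
    using assms(1,3) finite_subset by blast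
  then have "L1_dist \<Theta> m ma = 2 * (1 - bel m A)
      \<longleftrightarrow> (\<forall>X\<in>Pow A - {{}}. \<bar>m X - ma X\<bar> - (ma X - m X) = 0)"
    using L1_dist_mass_space_A_excess[OF assms] by (simp add: sum_nonneg_eq_0_iff)
  also have "\<dots> \<longleftrightarrow> (\<forall>X\<in>Pow A - {{}}. m X \<le> ma X)"
    by (intro ball_cong) auto
  finally show ?thesis
    using assms(4) by (simp add: dominating_masses_def)
qed

lemma L1_cond_eq_dominating_masses:
  assumes "finite \<Theta>" and "is_mass \<Theta> m" and "A \<subseteq> \<Theta>"
    and "dominating_masses \<Theta> m A \<noteq> {}"
  shows "L1_cond \<Theta> m A = dominating_masses \<Theta> m A"
proof -
  note lower_bound = L1_dist_mass_space_A_ge[OF assms(1-3)]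
  note attained_iff = L1_dist_mass_space_A_eq_iff[OF assms(1-3)]
  obtain m0 where m0: "m0 \<in> dominating_masses \<Theta> m A"
    using assms(4) by blast
  then have m0_space: "m0 \<in> mass_space_A \<Theta> A"
    by (simp add: dominating_masses_def)
  have "ma \<in> dominating_masses \<Theta> m A" if "ma \<in> L1_cond \<Theta> m A" for ma
  proof -
    have ma: "ma \<in> mass_space_A \<Theta> A" and "L1_dist \<Theta> m ma \<le> L1_dist \<Theta> m m0"
      using that m0_space by (auto simp: L1_cond_def)
    then have "L1_dist \<Theta> m ma = 2 * (1 - bel m A)"
      using lower_bound[OF ma] attained_iff[OF m0_space] m0 by linarith
    then show ?thesis
      using attained_iff[OF ma] by blast
  qed
  moreover have "ma \<in> L1_cond \<Theta> m A" if "ma \<in> dominating_masses \<Theta> m A" for ma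
  proof -
    have ma: "ma \<in> mass_space_A \<Theta> A"
      using that by (simp add: dominating_masses_def)
    then show ?thesis
      using attained_iff[OF ma] that lower_bound by (simp add: L1_cond_def)
  qed
  ultimately show ?thesis
    by blast
qed

lemma Cl_vertex:
  assumes "finite I" and "i \<in> I"
  shows "v i \<in> Cl I v"
proof -
  have "v i = (\<lambda>X. \<Sum>j\<in>I. (if j = i then 1 else 0) * v j X)"
    using assms by (simp add: if_distrib[of "\<lambda>c. c * _"] cong: if_cong)
  then show ?thesis
    unfolding Cl_def by (intro CollectI exI[of _ "\<lambda>j. if j = i then 1 else 0"])
      (simp add: assms)
qed

lemma L1_vertex_convex_combination:
  assumes "finite A" and "(\<Sum>i\<in>Pow A - {{}}. u i) = 1"
  shows "(\<Sum>i\<in>Pow A - {{}}. u i * L1_vertex m A i X)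
       = (if X \<in> Pow A - {{}} then m X + u X * (1 - bel m A) else 0)"
proof (cases "X \<in> Pow A - {{}}")
  case True
  have "(\<Sum>i\<in>Pow A - {{}}. u i * L1_vertex m A i X)
      = (\<Sum>i\<in>Pow A - {{}}. u i * m X + (if i = X then u X * (1 - bel m A) else 0))"
    using True by (intro sum.cong) (auto simp: L1_vertex_def algebra_simps)
  also have "\<dots> = m X + u X * (1 - bel m A)"
    using True assms by (simp add: sum.distrib sum_distrib_right[symmetric])
  finally show ?thesis
    using True by simp
next
  case False
  then have "\<forall>i\<in>Pow A - {{}}. L1_vertex m A i X = 0"
    by (auto simp: L1_vertex_def)
  then show ?thesis
    using False by auto
qed

lemma Cl_L1_vertex_subset:
  assumes "finite \<Theta>" and "is_mass \<Theta> m" and "A \<subseteq> \<Theta>"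
  shows "Cl (Pow A - {{}}) (L1_vertex m A) \<subseteq> dominating_masses \<Theta> m A"
proof
  fix ma
  assume "ma \<in> Cl (Pow A - {{}}) (L1_vertex m A)"
  then obtain u where u_nonneg: "\<forall>i\<in>Pow A - {{}}. 0 \<le> u i"
    and u_sum: "(\<Sum>i\<in>Pow A - {{}}. u i) = 1"
    and ma: "ma = (\<lambda>X. \<Sum>i\<in>Pow A - {{}}. u i * L1_vertex m A i X)"
    unfolding Cl_def by blast
  have fin_A: "finite A"
    using assms(1,3) finite_subset by blast
  have ma_eq: "ma X = (if X \<in> Pow A - {{}} then m X + u X * (1 - bel m A) else 0)" for X
    unfolding ma using L1_vertex_convex_combination[OF fin_A u_sum] .
  have m_nonneg: "0 \<le> m X" for X
    using assms(2) by (simp add: is_mass_def)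
  have "0 \<le> 1 - bel m A"
    using bel_le_one[OF assms] by simp
  then have dominates: "\<forall>X\<in>Pow A - {{}}. m X \<le> ma X"
    using u_nonneg by (simp add: ma_eq)
  have "(\<Sum>X\<in>Pow \<Theta>. ma X) = (\<Sum>X\<in>Pow A - {{}}. ma X)"
    using assms(1,3) by (intro sum.mono_neutral_right) (auto simp: ma_eq)
  also have "\<dots> = (\<Sum>X\<in>Pow A - {{}}. m X + u X * (1 - bel m A))"
    by (intro sum.cong) (simp_all add: ma_eq)
  also have "\<dots> = 1"
    using u_sum bel_eq_sum_nonempty[OF fin_A, of m] assms(2)
    by (simp add: sum.distrib sum_distrib_right[symmetric] is_mass_def)
  finally have "ma \<in> mass_space_A \<Theta> A"
    using dominates m_nonneg \<open>0 \<le> 1 - bel m A\<close> u_nonneg assms(3)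
    unfolding mass_space_A_def is_mass_def by (auto simp: ma_eq)
  then show "ma \<in> dominating_masses \<Theta> m A"
    using dominates by (simp add: dominating_masses_def)
qed

text \<open>The weight of X is its share of the deficit 1 - b(A); when there is no deficit every
  weight vector works, e.g. all weight on A.\<close>

lemma dominating_masses_subset_Cl:
  assumes "finite \<Theta>" and "is_mass \<Theta> m" and "A \<subseteq> \<Theta>" and "A \<noteq> {}"
  shows "dominating_masses \<Theta> m A \<subseteq> Cl (Pow A - {{}}) (L1_vertex m A)"
proof
  fix ma
  assume "ma \<in> dominating_masses \<Theta> m A"
  then have ma: "ma \<in> mass_space_A \<Theta> A" and dominates: "\<forall>X\<in>Pow A - {{}}. m X \<le> ma X"
    by (auto simp: dominating_masses_def)
  have fin_A: "finite A"
    using assms(1,3) finite_subset by blast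
  have deficit: "(\<Sum>X\<in>Pow A - {{}}. ma X - m X) = 1 - bel m A"
    using mass_space_A_sum[OF assms(1,3) ma] bel_eq_sum_nonempty[OF fin_A, of m] assms(2)
    by (simp add: sum_subtractf is_mass_def)
  obtain u where u_nonneg: "\<forall>i\<in>Pow A - {{}}. 0 \<le> u i"
    and u_sum: "(\<Sum>i\<in>Pow A - {{}}. u i) = 1"
    and u_share: "\<forall>X\<in>Pow A - {{}}. ma X = m X + u X * (1 - bel m A)"
  proof (cases "bel m A = 1")
    case True
    then have "\<forall>X\<in>Pow A - {{}}. ma X - m X = 0"
      using deficit dominates fin_A by (subst sum_nonneg_eq_0_iff[symmetric]) auto
    then show ?thesis
      using True fin_A assms(4) by (intro that[of "\<lambda>i. if i = A then 1 else 0"]) auto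
  next
    case False
    then have "0 < 1 - bel m A"
      using bel_le_one[OF assms(1-3)] by simp
    then show ?thesis
      using dominates deficit
      by (intro that[of "\<lambda>X. (ma X - m X) / (1 - bel m A)"])
        (simp_all add: sum_divide_distrib[symmetric])
  qed
  have "ma = (\<lambda>X. \<Sum>i\<in>Pow A - {{}}. u i * L1_vertex m A i X)"
  proof
    fix X
    show "ma X = (\<Sum>i\<in>Pow A - {{}}. u i * L1_vertex m A i X)"
      using L1_vertex_convex_combination[OF fin_A u_sum] u_share
        mass_space_A_vanishes[OF ma, of X] by auto
  qed
  then show "ma \<in> Cl (Pow A - {{}}) (L1_vertex m A)"
    unfolding Cl_def using u_nonneg u_sum by blast
qed

theorem theorem2:
  fixes \<Theta> A :: "'a set" and m :: "'a set \<Rightarrow> real"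
  assumes "finite \<Theta>" and "is_mass \<Theta> m" and "A \<noteq> {}" and "A \<subseteq> \<Theta>"
  shows "L1_cond \<Theta> m A = Cl (Pow A - {{}}) (L1_vertex m A)
         \<and> (\<forall>B. B \<noteq> {} \<and> B \<subseteq> A \<longrightarrow> L1_vertex m A B B = m B + pl \<Theta> m (\<Theta> - A))"
proof
  have Cl_eq: "Cl (Pow A - {{}}) (L1_vertex m A) = dominating_masses \<Theta> m A"
    using Cl_L1_vertex_subset[OF assms(1,2,4)] dominating_masses_subset_Cl[OF assms(1,2,4,3)]
    by (rule equalityI)
  have "L1_vertex m A A \<in> Cl (Pow A - {{}}) (L1_vertex m A)"
    using assms(1,3,4) by (intro Cl_vertex) (auto intro: finite_subset)
  then have "dominating_masses \<Theta> m A \<noteq> {}"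
    unfolding Cl_eq by blast
  then show "L1_cond \<Theta> m A = Cl (Pow A - {{}}) (L1_vertex m A)"
    unfolding Cl_eq by (rule L1_cond_eq_dominating_masses[OF assms(1,2,4)])
next
  have "\<Theta> - (\<Theta> - A) = A"
    using assms(4) by blast
  then show "\<forall>B. B \<noteq> {} \<and> B \<subseteq> A \<longrightarrow> L1_vertex m A B B = m B + pl \<Theta> m (\<Theta> - A)"
    by (simp add: L1_vertex_def pl_def)
qed

end
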